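(* Let $\mathcal{X}$ be a Banach space, $\mathcal{L}\in\mathcal{B}(\mathcal{X})$ the generator of a contractive uniformly continuous semigroup, and $M\in\mathcal{B}(\mathcal{X})$ a contraction such that $\|M^n-P\|_\infty\le\tilde c\,\delta^n$ for a projection $P\in\mathcal{B}(\mathcal{X})$, some $\delta\in(0,1)$, $\tilde c>1$ and all $n\in\mathbb{N}$. Then there is $\epsilon>0$ such that for all $t\ge0$, $n\in\mathbb{N}$ with $t\in[0,n\epsilon]$, and $\tilde\delta\in(\delta,1)$, $$\Big\|\big(Me^{\frac tn\mathcal{L}}\big)^n-e^{tP\mathcal{L}P}P\Big\|_\infty\le\frac{tc_p\|\mathcal{L}\|_\infty}{n}+\frac{c_p+(1+e^{\tilde b})(1+c_p^2)}{2}\frac{t^2\|\mathcal{L}\|_\infty^2}{n}+\frac{2\tilde c}{\tilde\delta-\delta}\tilde\delta^n+\frac{2\tilde\delta}{1-\tilde\delta}\frac{e^{\frac{6tc_p\tilde c\|\mathcal{L}\|_\infty}{\tilde\delta-\delta}}}{n},$$ where $c_p=\|\mathbf{1}-P\|_\infty$ and $e^{\tilde b}=\sup_{s\in[0,t]}\|e^{sP\mathcal{L}P}\|_\infty$.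
   Context: $\mathcal{B}(\mathcal{X})$: bounded operators with operator norm $\|\cdot\|_\infty$; $\mathbf{1}$ the identity; contraction: norm at most $1$; projection: bounded idempotent. Contractive semigroup: $\|e^{t\mathcal{L}}\|_\infty\le1$ for all $t\ge0$. *)

theory Defs
  imports "HOL-Analysis.Analysis"
begin

(* Bounded operators on a (real) Banach space are the type of bounded linear maps,
   with operator norm, composition and identity id_blinfun. *)

primrec opow :: "nat \<Rightarrow> ('a::real_normed_vector \<Rightarrow>\<^sub>L 'a) \<Rightarrow> ('a \<Rightarrow>\<^sub>L 'a)" where
  "opow 0 A = id_blinfun"
| "opow (Suc n) A = A o\<^sub>L opow n A"

definition op_exp :: "('a::banach \<Rightarrow>\<^sub>L 'a) \<Rightarrow> ('a \<Rightarrow>\<^sub>L 'a)" where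
  "op_exp A = (\<Sum>k. (1 / fact k) *\<^sub>R opow k A)"

end

(*
  Put T = exp ((t/n) L), x = (t/n) |L| and R_a = M^a - P.  Then M R_a = R_(a+1), P R_a = R_a P = 0,
  |R_a| <= c delta^a and |T - 1| <= e^x - 1.  Split (MT)^n = (MT)^n P + (MT)^n (1 - P).  The transient
  parts (MT)^n R_(b+1) decay like delta^b, by induction on n with a fixed point alpha of
  delta (xi c (1 + alpha) + alpha) <= alpha, where xi = e^x - 1.  The part (MT)^n P differs from
  P (PTP)^n by a sum of such transient terms, and (PTP)^n telescopes against exp (t PLP) P because
  PTP and exp ((t/n) PLP) P agree up to 2 (e^x - 1 - x).  Once x is below a threshold depending only
  on c and delta, elementary real estimates give the stated bound, the exponential term absorbing
  all contributions of higher order.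
*)

theory Submission
  imports Defs
begin

type_synonym 'a op = "'a \<Rightarrow>\<^sub>L 'a"

interpretation blinfun_compose: bounded_bilinear blinfun_compose
  by (rule bounded_bilinear_blinfun_compose)

lemma blinfun_compose_assoc: "(A o\<^sub>L B) o\<^sub>L C = A o\<^sub>L (B o\<^sub>L C)"
  by (rule blinfun_eqI) simp

lemma blinfun_compose_id_left [simp]: "id_blinfun o\<^sub>L A = A"
  and blinfun_compose_id_right [simp]: "A o\<^sub>L id_blinfun = A"
  by (auto intro: blinfun_eqI)

lemma blinfun_compose_apply_eq: "A o\<^sub>L B = C \<Longrightarrow> A (B x) = C x"
  by (metis blinfun_apply_blinfun_compose)

lemma norm_blinfun_compose3: "norm (A o\<^sub>L B o\<^sub>L C) \<le> norm A * norm B * norm C"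
  by (meson norm_blinfun_compose mult_right_mono norm_ge_zero order_trans)

lemma norm_blinfun_compose_le_one:
  "norm A \<le> 1 \<Longrightarrow> norm B \<le> 1 \<Longrightarrow> norm (A o\<^sub>L B) \<le> 1"
  by (meson mult_le_one norm_blinfun_compose norm_ge_zero order_trans)

lemma norm_triangle_le3:
  "norm u \<le> x \<Longrightarrow> norm v \<le> y \<Longrightarrow> norm w \<le> z \<Longrightarrow> norm (u + v + w) \<le> x + y + z"
  by (meson add_mono norm_triangle_ineq order_trans)

lemma bounded_bilinear_Cauchy_product_sums:
  fixes a :: "nat \<Rightarrow> 'a::banach" and b :: "nat \<Rightarrow> 'b::banach"
  assumes bilinear: "bounded_bilinear pr"
    and a: "summable (\<lambda>k. norm (a k))" and b: "summable (\<lambda>k. norm (b k))"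
  shows "(\<lambda>k. \<Sum>i\<le>k. pr (a i) (b (k - i))) sums pr (\<Sum>k. a k) (\<Sum>k. b k)"
proof -
  interpret bounded_bilinear pr by (rule bilinear)
  obtain K where K: "\<And>x y. norm (pr x y) \<le> norm x * norm y * K"
    using bounded by blast
  define square where "square n = {..<n} \<times> {..<n}" for n :: nat
  define triangle where "triangle n = {(i, j). i + j < n}" for n :: nat
  have triangle_sub: "triangle n \<subseteq> square n" for n
    by (auto simp: square_def triangle_def)
  have finite_square: "finite (square n)" for n
    by (simp add: square_def)
  have square_sum: "(\<Sum>(i, j)\<in>square n. h i j) = (\<Sum>i<n. \<Sum>j<n. h i j)" for n
    and h :: "nat \<Rightarrow> nat \<Rightarrow> 'z::comm_monoid_add"
    by (simp add: square_def sum.cartesian_product)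
  have triangle_sum: "(\<Sum>(i, j)\<in>triangle n. h i j) = (\<Sum>k<n. \<Sum>i\<le>k. h i (k - i))" for n
    and h :: "nat \<Rightarrow> nat \<Rightarrow> 'z::comm_monoid_add"
    unfolding triangle_def by (rule sum.triangle_reindex)
  let ?g = "\<lambda>(i, j). pr (a i) (b j)"
  let ?f = "\<lambda>(i, j). norm (a i) * norm (b j)"
  have "(\<lambda>n. pr (\<Sum>i<n. a i) (\<Sum>j<n. b j)) \<longlonglongrightarrow> pr (\<Sum>k. a k) (\<Sum>k. b k)"
    by (intro tendsto summable_LIMSEQ summable_norm_cancel[OF a] summable_norm_cancel[OF b])
  then have square_lim: "(\<lambda>n. sum ?g (square n)) \<longlonglongrightarrow> pr (\<Sum>k. a k) (\<Sum>k. b k)"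
    unfolding square_sum sum_left unfolding sum_right .
  \<comment> \<open>The norms of the terms off the triangle tend to zero by the scalar Cauchy product.\<close>
  have "(\<lambda>n. (\<Sum>i<n. norm (a i)) * (\<Sum>j<n. norm (b j))) \<longlonglongrightarrow> (\<Sum>k. norm (a k)) * (\<Sum>k. norm (b k))"
    by (intro tendsto_mult summable_LIMSEQ a b)
  then have "(\<lambda>n. sum ?f (square n)) \<longlonglongrightarrow> (\<Sum>k. norm (a k)) * (\<Sum>k. norm (b k))"
    by (simp only: square_sum sum_product)
  moreover have "(\<lambda>n. sum ?f (triangle n)) \<longlonglongrightarrow> (\<Sum>k. norm (a k)) * (\<Sum>k. norm (b k))"
    using Cauchy_product_sums[of "\<lambda>k. norm (a k)" "\<lambda>k. norm (b k)"] a b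
    by (simp only: triangle_sum sums_def real_norm_def abs_norm_cancel)
  ultimately have "(\<lambda>n. sum ?f (square n) - sum ?f (triangle n)) \<longlonglongrightarrow> 0"
    using tendsto_diff by fastforce
  then have off_lim: "(\<lambda>n. K * sum ?f (square n - triangle n)) \<longlonglongrightarrow> 0"
    using tendsto_mult_right_zero by (simp add: sum_diff finite_square triangle_sub)
  have off_bound: "norm (sum ?g (square n) - sum ?g (triangle n)) \<le> K * sum ?f (square n - triangle n)" for n
  proof -
    have "norm (sum ?g (square n) - sum ?g (triangle n)) = norm (sum ?g (square n - triangle n))"
      by (simp add: sum_diff finite_square triangle_sub)
    also have "\<dots> \<le> (\<Sum>p\<in>square n - triangle n. K * ?f p)"
      by (rule order_trans[OF norm_sum sum_mono]) (use K in \<open>auto simp: mult.commute\<close>)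
    finally show ?thesis by (simp add: sum_distrib_left)
  qed
  have "(\<lambda>n. sum ?g (square n) - sum ?g (triangle n)) \<longlonglongrightarrow> 0"
    by (rule Lim_null_comparison[OF always_eventually off_lim]) (intro allI off_bound)
  with square_lim have "(\<lambda>n. sum ?g (triangle n)) \<longlonglongrightarrow> pr (\<Sum>k. a k) (\<Sum>k. b k)"
    by (rule Lim_transform2)
  then show ?thesis
    by (simp add: sums_def triangle_sum)
qed

lemma opow_add: "opow (m + n) A = opow m A o\<^sub>L opow n A"
  by (induction m) (simp_all add: blinfun_compose_assoc)

lemma opow_Suc_right: "opow (Suc n) A = opow n A o\<^sub>L A"
  using opow_add[of n 1 A] by simp

lemma opow_scaleR: "opow n (r *\<^sub>R A) = r ^ n *\<^sub>R opow n A"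
  by (induction n) (simp_all add: blinfun_compose.scaleR_left blinfun_compose.scaleR_right)

lemma norm_opow_le: "norm (opow n A) \<le> norm A ^ n"
proof (induction n)
  case 0
  show ?case by (simp add: norm_blinfun_id_le)
next
  case (Suc n)
  have "norm (opow (Suc n) A) \<le> norm A * norm (opow n A)"
    by (simp add: norm_blinfun_compose)
  also have "\<dots> \<le> norm A * norm A ^ n"
    using Suc by (simp add: mult_left_mono)
  finally show ?case by simp
qed

lemma norm_opow_le_one: "norm A \<le> 1 \<Longrightarrow> norm (opow n A) \<le> 1"
  by (meson norm_opow_le norm_ge_zero order_trans power_le_one)

lemma norm_op_exp_term_le: "norm ((1 / fact k) *\<^sub>R opow k A) \<le> norm A ^ k / fact k"
  using norm_opow_le[of k A] by (simp add: divide_right_mono)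

lemma summable_real_exp_series: "summable (\<lambda>k. x ^ k / fact k :: real)"
  using summable_exp[of x] by (simp add: field_simps)

lemma summable_norm_op_exp_series:
  "summable (\<lambda>k. norm ((1 / fact k) *\<^sub>R opow k (A :: 'a::banach op)))"
  by (rule summable_comparison_test'[OF summable_real_exp_series[of "norm A"]])
    (simp add: divide_right_mono norm_opow_le)

lemma norm_op_exp_minus_partial_sum_le:
  fixes A :: "'a::banach op"
  shows "norm (op_exp A - (\<Sum>k<m. (1 / fact k) *\<^sub>R opow k A))
           \<le> exp (norm A) - (\<Sum>k<m. norm A ^ k / fact k)"
proof -
  let ?f = "\<lambda>k. (1 / fact k) *\<^sub>R opow k A"
  let ?g = "\<lambda>k. norm A ^ k / fact k"
  have f_tail: "op_exp A - (\<Sum>k<m. ?f k) = (\<Sum>k. ?f (k + m))"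
    using suminf_split_initial_segment[OF summable_norm_cancel[OF summable_norm_op_exp_series[of A]], where k=m]
    unfolding op_exp_def by simp
  have "(\<Sum>k. ?g k) = exp (norm A)"
    using exp_converges[of "norm A"] by (simp add: sums_iff field_simps)
  then have g_tail: "exp (norm A) - (\<Sum>k<m. ?g k) = (\<Sum>k. ?g (k + m))"
    using suminf_split_initial_segment[OF summable_real_exp_series, where k=m] by simp
  have f_summable: "summable (\<lambda>k. norm (?f (k + m)))"
    using summable_norm_op_exp_series by (rule summable_ignore_initial_segment)
  have "norm (\<Sum>k. ?f (k + m)) \<le> (\<Sum>k. norm (?f (k + m)))"
    by (rule summable_norm[OF f_summable])
  also have "\<dots> \<le> (\<Sum>k. ?g (k + m))"
    by (intro suminf_le f_summable norm_op_exp_term_le summable_ignore_initial_segment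
        summable_real_exp_series)
  finally show ?thesis
    using f_tail g_tail by simp
qed

lemma norm_op_exp_le: "norm (op_exp (A :: 'a::banach op)) \<le> exp (norm A)"
  using norm_op_exp_minus_partial_sum_le[of A 0] by simp

lemma norm_op_exp_minus_id_le:
  "norm (op_exp (A :: 'a::banach op) - id_blinfun) \<le> exp (norm A) - 1"
  using norm_op_exp_minus_partial_sum_le[of A 1] by simp

lemma norm_op_exp_minus_id_minus_le:
  "norm (op_exp (A :: 'a::banach op) - id_blinfun - A) \<le> exp (norm A) - 1 - norm A"
  using norm_op_exp_minus_partial_sum_le[of A 2] by (simp add: numeral_2_eq_2 diff_diff_eq)

lemma op_exp_zero: "op_exp (0 :: 'a::banach op) = id_blinfun"
proof -
  have "op_exp (0 :: 'a op) = (\<Sum>k\<in>{0}. (1 / fact k) *\<^sub>R opow k (0 :: 'a op))"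
    unfolding op_exp_def by (rule suminf_finite) (auto simp: gr0_conv_Suc)
  then show ?thesis by simp
qed

lemma op_exp_add:
  fixes A :: "'a::banach op"
  shows "op_exp (r *\<^sub>R A) o\<^sub>L op_exp (s *\<^sub>R A) = op_exp ((r + s) *\<^sub>R A)"
proof -
  let ?term = "\<lambda>B k. (1 / fact k) *\<^sub>R opow k B"
  have "(\<lambda>k. \<Sum>i\<le>k. ?term (r *\<^sub>R A) i o\<^sub>L ?term (s *\<^sub>R A) (k - i))
          sums (op_exp (r *\<^sub>R A) o\<^sub>L op_exp (s *\<^sub>R A))"
    unfolding op_exp_def
    by (rule bounded_bilinear_Cauchy_product_sums[OF bounded_bilinear_blinfun_compose
          summable_norm_op_exp_series summable_norm_op_exp_series])
  moreover have "(\<Sum>i\<le>k. ?term (r *\<^sub>R A) i o\<^sub>L ?term (s *\<^sub>R A) (k - i)) = ?term ((r + s) *\<^sub>R A) k"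
    for k
  proof -
    have "(\<Sum>i\<le>k. ?term (r *\<^sub>R A) i o\<^sub>L ?term (s *\<^sub>R A) (k - i))
        = (\<Sum>i\<le>k. (r ^ i / fact i * (s ^ (k - i) / fact (k - i)))) *\<^sub>R opow k A"
      unfolding scaleR_sum_left
    proof (rule sum.cong)
      fix i assume "i \<in> {..k}"
      then have "opow i A o\<^sub>L opow (k - i) A = opow k A"
        using opow_add[of i "k - i" A] by simp
      then show "?term (r *\<^sub>R A) i o\<^sub>L ?term (s *\<^sub>R A) (k - i)
          = (r ^ i / fact i * (s ^ (k - i) / fact (k - i))) *\<^sub>R opow k A"
        by (simp add: opow_scaleR blinfun_compose.scaleR_left blinfun_compose.scaleR_right mult_ac)
    qed simp
    also have "(\<Sum>i\<le>k. r ^ i / fact i * (s ^ (k - i) / fact (k - i))) = (r + s) ^ k / fact k"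
      using exp_series_add_commuting[of r s k] by (simp add: divide_inverse mult_ac)
    finally show ?thesis
      by (simp add: opow_scaleR)
  qed
  ultimately show ?thesis
    unfolding op_exp_def by (simp add: sums_iff)
qed

lemma opow_op_exp: "opow n (op_exp (s *\<^sub>R A)) = op_exp ((real n * s) *\<^sub>R (A :: 'a::banach op))"
proof (induction n)
  case 0
  show ?case by (simp add: op_exp_zero)
next
  case (Suc n)
  then have "opow (Suc n) (op_exp (s *\<^sub>R A)) = op_exp ((s + real n * s) *\<^sub>R A)"
    by (simp add: op_exp_add)
  then show ?case by (simp add: algebra_simps)
qed

lemma tendsto_opow_of_geometric_bound:
  assumes bound: "\<And>n. norm (opow n M - P) \<le> c * \<delta> ^ n" and "0 \<le> \<delta>" "\<delta> < 1"
  shows "(\<lambda>n. opow n M) \<longlonglongrightarrow> P"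
proof -
  have "(\<lambda>n. c * \<delta> ^ n) \<longlonglongrightarrow> 0"
    using assms(2,3) by (intro tendsto_mult_right_zero LIMSEQ_power_zero) simp
  then have "(\<lambda>n. opow n M - P) \<longlonglongrightarrow> 0"
    by (rule Lim_null_comparison[OF always_eventually, rotated]) (intro allI bound)
  then show ?thesis
    by (rule LIM_zero_cancel)
qed

lemma opow_limit_absorbs:
  assumes lim: "(\<lambda>n. opow n M) \<longlonglongrightarrow> P"
  shows "M o\<^sub>L P = P" and "P o\<^sub>L M = P"
proof -
  have Suc_lim: "(\<lambda>n. opow (Suc n) M) \<longlonglongrightarrow> P"
    using lim by (rule LIMSEQ_Suc)
  have "(\<lambda>n. M o\<^sub>L opow n M) \<longlonglongrightarrow> (M o\<^sub>L P)"
    by (intro blinfun_compose.tendsto tendsto_const lim)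
  then show "M o\<^sub>L P = P"
    using Suc_lim by (simp add: LIMSEQ_unique)
  have "(\<lambda>n. opow n M o\<^sub>L M) \<longlonglongrightarrow> (P o\<^sub>L M)"
    by (intro blinfun_compose.tendsto tendsto_const lim)
  then show "P o\<^sub>L M = P"
    using Suc_lim by (simp add: LIMSEQ_unique flip: opow_Suc_right)
qed

lemma norm_opow_limit_le_one:
  assumes "(\<lambda>n. opow n M) \<longlonglongrightarrow> P" and "norm M \<le> 1"
  shows "norm P \<le> 1"
  by (rule LIMSEQ_le_const2[OF tendsto_norm[OF assms(1)]])
    (use norm_opow_le_one[OF assms(2)] in blast)

lemma norm_idempotent_ge_one:
  assumes "E o\<^sub>L E = E" and "E \<noteq> 0"
  shows "1 \<le> norm E"
proof -
  have "norm E \<le> norm E * norm E"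
    by (metis assms(1) norm_blinfun_compose)
  then show ?thesis
    using assms(2) by simp
qed

lemma exp_minus_one_minus_mono:
  fixes a b :: real
  assumes "0 \<le> a" and "a \<le> b"
  shows "exp a - 1 - a \<le> exp b - 1 - b"
proof -
  have "exp a * (1 + (b - a)) \<le> exp a * exp (b - a)"
    using assms by (intro mult_left_mono) auto
  also have "\<dots> = exp b"
    by (simp add: mult_exp_exp)
  finally have "exp a * (1 + (b - a)) \<le> exp b" .
  moreover have "b - a \<le> exp a * (b - a)"
    using assms by (simp add: mult_le_cancel_right1)
  ultimately show ?thesis
    by (simp add: algebra_simps)
qed

lemma norm_compression_le:
  assumes "norm P \<le> 1"
  shows "norm (P o\<^sub>L B o\<^sub>L P) \<le> norm B"
proof -
  have "norm (P o\<^sub>L B o\<^sub>L P) \<le> norm P * norm B * norm P"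
    by (rule norm_blinfun_compose3)
  also have "\<dots> \<le> 1 * norm B * 1"
    using assms by (intro mult_mono) auto
  finally show ?thesis by simp
qed

lemma norm_compression_op_exp_minus_le:
  fixes P B :: "'a::banach op"
  assumes P_idem: "P o\<^sub>L P = P" and norm_P: "norm P \<le> 1"
  shows "norm ((P o\<^sub>L op_exp B o\<^sub>L P) - (op_exp (P o\<^sub>L B o\<^sub>L P) o\<^sub>L P))
           \<le> 2 * (exp (norm B) - 1 - norm B)"
proof -
  let ?A = "P o\<^sub>L B o\<^sub>L P"
  let ?rem = "\<lambda>C. op_exp C - id_blinfun - C"
  have P_idem': "P (P x) = P x" for x
    using P_idem by (rule blinfun_compose_apply_eq)
  have split: "(P o\<^sub>L op_exp B o\<^sub>L P) - (op_exp ?A o\<^sub>L P)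
      = (P o\<^sub>L ?rem B o\<^sub>L P) - (?rem ?A o\<^sub>L P)"
    by (rule blinfun_eqI) (simp add: blinfun.bilinear_simps P_idem')
  have rem_B: "norm (P o\<^sub>L ?rem B o\<^sub>L P) \<le> exp (norm B) - 1 - norm B"
    using norm_compression_le[OF norm_P, of "?rem B"] norm_op_exp_minus_id_minus_le[of B]
    by linarith
  have norm_A: "norm ?A \<le> norm B"
    using norm_P by (rule norm_compression_le)
  have rem_A: "norm (?rem ?A o\<^sub>L P) \<le> exp (norm B) - 1 - norm B"
  proof -
    have "norm (?rem ?A o\<^sub>L P) \<le> norm (?rem ?A) * norm P"
      by (rule norm_blinfun_compose)
    also have "\<dots> \<le> norm (?rem ?A)"
      using norm_P by (simp add: mult_left_le)
    also have "\<dots> \<le> exp (norm ?A) - 1 - norm ?A"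
      by (rule norm_op_exp_minus_id_minus_le)
    also have "\<dots> \<le> exp (norm B) - 1 - norm B"
      using norm_A by (intro exp_minus_one_minus_mono) auto
    finally show ?thesis .
  qed
  show ?thesis
    unfolding split using order_trans[OF norm_triangle_ineq4 add_mono[OF rem_B rem_A]] by simp
qed

lemma norm_compressed_opow_minus_le:
  fixes P B C :: "'a::real_normed_vector op"
  assumes P_B: "P o\<^sub>L B = B" and norm_B: "norm B \<le> 1"
    and norm_opow_C: "\<And>j. j < n \<Longrightarrow> norm (opow j C) \<le> e"
  shows "norm ((P o\<^sub>L opow n B) - (opow n C o\<^sub>L P)) \<le> real n * e * norm (B - (C o\<^sub>L P))"
  using norm_opow_C
proof (induction n)
  case 0
  show ?case by simp
next
  case (Suc n)
  let ?D = "(P o\<^sub>L opow n B) - (opow n C o\<^sub>L P)"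
  have P_B': "P (B x) = B x" for x
    using P_B by (rule blinfun_compose_apply_eq)
  have telescope: "(P o\<^sub>L opow (Suc n) B) - (opow (Suc n) C o\<^sub>L P)
      = (?D o\<^sub>L B) + (opow n C o\<^sub>L (B - (C o\<^sub>L P)))"
    by (rule blinfun_eqI) (simp add: opow_Suc_right blinfun.bilinear_simps P_B' del: opow.simps)
  have e_nonneg: "0 \<le> e"
    using Suc.prems[of 0] norm_ge_zero order_trans by blast
  have "norm (?D o\<^sub>L B) \<le> norm ?D * norm B"
    by (rule norm_blinfun_compose)
  also have "\<dots> \<le> real n * e * norm (B - (C o\<^sub>L P)) * 1"
    using Suc e_nonneg norm_B by (intro mult_mono) auto
  finally have head: "norm (?D o\<^sub>L B) \<le> real n * e * norm (B - (C o\<^sub>L P))"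
    by simp
  have "norm (opow n C o\<^sub>L (B - (C o\<^sub>L P))) \<le> norm (opow n C) * norm (B - (C o\<^sub>L P))"
    by (rule norm_blinfun_compose)
  also have "\<dots> \<le> e * norm (B - (C o\<^sub>L P))"
    using Suc.prems[of n] by (simp add: mult_right_mono)
  finally have step: "norm (opow n C o\<^sub>L (B - (C o\<^sub>L P))) \<le> e * norm (B - (C o\<^sub>L P))" .
  show ?case
    unfolding telescope using norm_triangle_le[OF add_mono[OF head step]]
    by (simp add: algebra_simps)
qed

lemma norm_id_minus_projection:
  fixes P :: "'a::real_normed_vector op"
  assumes "P o\<^sub>L P = P" and "norm P \<le> 1" and "P \<noteq> id_blinfun"
  shows "1 \<le> norm (id_blinfun - P)" and "norm (id_blinfun - P) \<le> 2"
proof -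
  have "(id_blinfun - P) o\<^sub>L (id_blinfun - P) = id_blinfun - P"
  proof (rule blinfun_eqI)
    fix v
    have "P (P v) = P v"
      using assms(1) by (rule blinfun_compose_apply_eq)
    then show "((id_blinfun - P) o\<^sub>L (id_blinfun - P)) v = (id_blinfun - P) v"
      by (simp add: blinfun.bilinear_simps)
  qed
  then show "1 \<le> norm (id_blinfun - P)"
    using assms(3) by (intro norm_idempotent_ge_one) auto
  have "norm (id_blinfun - P) \<le> norm (id_blinfun :: 'a op) + norm P"
    by (rule norm_triangle_ineq4)
  also have "\<dots> \<le> 2"
    using assms(2) norm_blinfun_id_le[where 'a='a] by simp
  finally show "norm (id_blinfun - P) \<le> 2" .
qed

lemma SUP_norm_op_exp_compression_bounds:
  fixes L P :: "'a::banach op"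
  assumes t: "0 \<le> t" and norm_P: "norm P \<le> 1"
  defines "eb \<equiv> SUP s\<in>{0..t}. norm (op_exp (s *\<^sub>R (P o\<^sub>L L o\<^sub>L P)))"
  shows "\<And>s. s \<in> {0..t} \<Longrightarrow> norm (op_exp (s *\<^sub>R (P o\<^sub>L L o\<^sub>L P))) \<le> eb"
    and "0 \<le> eb" and "eb \<le> exp (t * norm L)"
proof -
  have bound: "norm (op_exp (s *\<^sub>R (P o\<^sub>L L o\<^sub>L P))) \<le> exp (t * norm L)" if "s \<in> {0..t}" for s
  proof -
    have "norm (s *\<^sub>R (P o\<^sub>L L o\<^sub>L P)) \<le> t * norm L"
      using that norm_compression_le[OF norm_P, of L] by (auto intro: mult_mono)
    then show ?thesis
      using norm_op_exp_le[of "s *\<^sub>R (P o\<^sub>L L o\<^sub>L P)"] by (simp add: order_trans)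
  qed
  show upper: "\<And>s. s \<in> {0..t} \<Longrightarrow> norm (op_exp (s *\<^sub>R (P o\<^sub>L L o\<^sub>L P))) \<le> eb"
    unfolding eb_def using bound by (intro cSUP_upper bdd_aboveI2) auto
  show "0 \<le> eb"
    using order_trans[OF norm_ge_zero upper[of 0]] t by simp
  show "eb \<le> exp (t * norm L)"
    unfolding eb_def using bound t by (intro cSUP_least) auto
qed

locale perturbed_mixing =
  fixes M P T :: "'a::banach op" and c \<delta> \<xi> :: real
  assumes P_idem: "P o\<^sub>L P = P" and M_P: "M o\<^sub>L P = P" and P_M: "P o\<^sub>L M = P"
    and norm_P: "norm P \<le> 1" and norm_M: "norm M \<le> 1" and norm_T: "norm T \<le> 1"
    and mixing: "norm (opow a M - P) \<le> c * \<delta> ^ a"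
    and delta_nonneg: "0 \<le> \<delta>"
    and norm_T_minus_id: "norm (T - id_blinfun) \<le> \<xi>"
begin

definition R :: "nat \<Rightarrow> 'a op" where "R a = opow a M - P"

definition Z :: "nat \<Rightarrow> 'a op" where "Z n = opow n (M o\<^sub>L T)"

abbreviation X :: "'a op" where "X \<equiv> T - id_blinfun"

lemma norm_PTP: "norm (P o\<^sub>L T o\<^sub>L P) \<le> 1"
  by (intro norm_blinfun_compose_le_one norm_P norm_T)

lemma c_nonneg: "0 \<le> c"
  using order_trans[OF norm_ge_zero mixing[of 0]] by simp

lemma xi_nonneg: "0 \<le> \<xi>"
  by (rule order_trans[OF norm_ge_zero norm_T_minus_id])

lemma norm_R: "norm (R a) \<le> c * \<delta> ^ a"
  unfolding R_def by (rule mixing)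

lemma norm_Z: "norm (Z n) \<le> 1"
  unfolding Z_def by (intro norm_opow_le_one norm_blinfun_compose_le_one norm_M norm_T)

lemma norm_Z_comp_P: "norm (Z n o\<^sub>L P) \<le> 1"
  by (intro norm_blinfun_compose_le_one norm_Z norm_P)

lemma Z_Suc: "Z (Suc n) = Z n o\<^sub>L (M o\<^sub>L T)"
  unfolding Z_def by (rule opow_Suc_right)

lemma Z_split: "Z n = (Z n o\<^sub>L P) + (Z n o\<^sub>L R 0)"
  by (rule blinfun_eqI) (simp add: R_def blinfun.bilinear_simps)

lemma P_apply_idem [simp]: "P (P x) = P x"
  and M_apply_P [simp]: "M (P x) = P x"
  and P_apply_M [simp]: "P (M x) = P x"
  using P_idem M_P P_M by (auto intro: blinfun_compose_apply_eq)

lemma P_apply_opow_M [simp]: "P (opow a M x) = P x"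
  by (induction a arbitrary: x) (simp_all add: opow_Suc_right del: opow.simps(2))

lemma P_apply_R [simp]: "P (R a x) = 0"
  by (simp add: R_def blinfun.bilinear_simps)

lemma M_apply_R: "M (R a x) = R (Suc a) x"
  by (simp add: R_def blinfun.bilinear_simps)

lemma R_one_apply: "R (Suc 0) x = M x - P x"
  by (simp add: R_def blinfun.bilinear_simps)

lemma Z_Suc_comp_R:
  "Z (Suc n) o\<^sub>L R a
     = (Z n o\<^sub>L P o\<^sub>L X o\<^sub>L R a) + (Z n o\<^sub>L R (Suc a)) + (Z n o\<^sub>L R 1 o\<^sub>L X o\<^sub>L R a)"
  by (rule blinfun_eqI) (simp add: Z_Suc blinfun.bilinear_simps M_apply_R R_one_apply)

lemma Z_Suc_comp_P:
  "Z (Suc n) o\<^sub>L P = (Z n o\<^sub>L P o\<^sub>L (P o\<^sub>L T o\<^sub>L P)) + (Z n o\<^sub>L R 1 o\<^sub>L X o\<^sub>L P)"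
  by (rule blinfun_eqI) (simp add: Z_Suc blinfun.bilinear_simps R_one_apply)

lemma norm_Z_comp_R_Suc_le:
  assumes alpha_nonneg: "0 \<le> \<alpha>" and alpha_fixed: "\<delta> * (\<xi> * c * (1 + \<alpha>) + \<alpha>) \<le> \<alpha>"
  shows "norm (Z n o\<^sub>L R (Suc b)) \<le> \<delta> ^ b * (\<alpha> + c * \<delta> * (\<delta> * (1 + c * \<xi>)) ^ n)"
proof (induction n arbitrary: b)
  case 0
  have "norm (Z 0 o\<^sub>L R (Suc b)) \<le> c * \<delta> ^ Suc b"
    using norm_R[of "Suc b"] by (simp add: Z_def)
  also have "\<dots> \<le> \<delta> ^ b * (\<alpha> + c * \<delta>)"
    using alpha_nonneg delta_nonneg by (simp add: algebra_simps)
  finally show ?case by simp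
next
  case (Suc n)
  let ?\<rho> = "\<delta> * (1 + c * \<xi>)"
  let ?v = "\<alpha> + c * \<delta> * ?\<rho> ^ n"
  have v_nonneg: "0 \<le> ?v"
    using alpha_nonneg c_nonneg delta_nonneg xi_nonneg by simp
  have through_P: "norm (Z n o\<^sub>L P o\<^sub>L X o\<^sub>L R (Suc b)) \<le> 1 * \<xi> * (c * \<delta> ^ Suc b)"
    by (rule order_trans[OF norm_blinfun_compose3])
      (intro mult_mono norm_Z_comp_P norm_T_minus_id norm_R norm_ge_zero; use xi_nonneg in simp)
  have shifted: "norm (Z n o\<^sub>L R (Suc (Suc b))) \<le> \<delta> ^ Suc b * ?v"
    by (rule Suc.IH)
  have through_R: "norm (Z n o\<^sub>L R 1 o\<^sub>L X o\<^sub>L R (Suc b)) \<le> ?v * \<xi> * (c * \<delta> ^ Suc b)"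
    using Suc.IH[of 0] v_nonneg xi_nonneg
    by (intro order_trans[OF norm_blinfun_compose3] mult_mono norm_T_minus_id norm_R norm_ge_zero)
      simp_all
  have "norm (Z (Suc n) o\<^sub>L R (Suc b))
      \<le> 1 * \<xi> * (c * \<delta> ^ Suc b) + \<delta> ^ Suc b * ?v + ?v * \<xi> * (c * \<delta> ^ Suc b)"
    unfolding Z_Suc_comp_R using through_P shifted through_R by (rule norm_triangle_le3)
  also have "\<dots> = \<delta> ^ b * (\<delta> * (\<xi> * c * (1 + \<alpha>) + \<alpha>)) + \<delta> ^ b * (c * \<delta> * ?\<rho> ^ Suc n)"
    by (simp add: algebra_simps)
  also have "\<dots> \<le> \<delta> ^ b * \<alpha> + \<delta> ^ b * (c * \<delta> * ?\<rho> ^ Suc n)"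
    using alpha_fixed delta_nonneg by (simp add: mult_left_mono)
  finally show ?case
    by (simp add: algebra_simps)
qed

lemma norm_Z_comp_P_minus_le:
  "norm ((Z n o\<^sub>L P) - (P o\<^sub>L opow n (P o\<^sub>L T o\<^sub>L P))) \<le> \<xi> * (\<Sum>j<n. norm (Z j o\<^sub>L R 1))"
proof (induction n)
  case 0
  show ?case by (simp add: Z_def)
next
  case (Suc n)
  let ?B = "P o\<^sub>L T o\<^sub>L P"
  let ?D = "(Z n o\<^sub>L P) - (P o\<^sub>L opow n ?B)"
  have step: "(Z (Suc n) o\<^sub>L P) - (P o\<^sub>L opow (Suc n) ?B) = (?D o\<^sub>L ?B) + (Z n o\<^sub>L R 1 o\<^sub>L X o\<^sub>L P)"
    by (rule blinfun_eqI)
      (simp add: Z_Suc_comp_P opow_Suc_right blinfun.bilinear_simps del: opow.simps(2))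
  have "norm (?D o\<^sub>L ?B) \<le> norm ?D * norm ?B"
    by (rule norm_blinfun_compose)
  also have "\<dots> \<le> \<xi> * (\<Sum>j<n. norm (Z j o\<^sub>L R 1)) * 1"
    using Suc.IH norm_PTP xi_nonneg by (intro mult_mono) (auto intro!: mult_nonneg_nonneg sum_nonneg)
  finally have head: "norm (?D o\<^sub>L ?B) \<le> \<xi> * (\<Sum>j<n. norm (Z j o\<^sub>L R 1))"
    by simp
  have "norm (Z n o\<^sub>L R 1 o\<^sub>L X o\<^sub>L P) \<le> norm (Z n o\<^sub>L R 1) * \<xi> * 1"
    using xi_nonneg
    by (intro order_trans[OF norm_blinfun_compose3] mult_mono norm_T_minus_id norm_P) auto
  then have "norm ((?D o\<^sub>L ?B) + (Z n o\<^sub>L R 1 o\<^sub>L X o\<^sub>L P))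
      \<le> \<xi> * (\<Sum>j<n. norm (Z j o\<^sub>L R 1)) + \<xi> * norm (Z n o\<^sub>L R 1)"
    using head by (intro norm_triangle_le add_mono) (simp_all add: mult.commute)
  then show ?case
    unfolding step by (simp add: distrib_left)
qed

lemma norm_Z_Suc_comp_R0_le:
  "norm (Z (Suc n) o\<^sub>L R 0) \<le> \<xi> * norm (R 0) + norm (Z n o\<^sub>L R 1) * (1 + \<xi> * norm (R 0))"
proof -
  have "norm (Z n o\<^sub>L P o\<^sub>L X o\<^sub>L R 0) \<le> 1 * \<xi> * norm (R 0)"
    using xi_nonneg
    by (intro order_trans[OF norm_blinfun_compose3] mult_mono norm_Z_comp_P norm_T_minus_id) auto
  moreover have "norm (Z n o\<^sub>L R 1 o\<^sub>L X o\<^sub>L R 0) \<le> norm (Z n o\<^sub>L R 1) * \<xi> * norm (R 0)"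
    using xi_nonneg
    by (intro order_trans[OF norm_blinfun_compose3] mult_mono norm_T_minus_id) auto
  ultimately have "norm (Z (Suc n) o\<^sub>L R 0)
      \<le> 1 * \<xi> * norm (R 0) + norm (Z n o\<^sub>L R 1) + norm (Z n o\<^sub>L R 1) * \<xi> * norm (R 0)"
    unfolding Z_Suc_comp_R[of n 0] One_nat_def[symmetric] by (intro norm_triangle_le3) auto
  then show ?thesis
    by (simp add: algebra_simps)
qed

lemma norm_Z_minus_le:
  assumes alpha_nonneg: "0 \<le> \<alpha>" and alpha_fixed: "\<delta> * (\<xi> * c * (1 + \<alpha>) + \<alpha>) \<le> \<alpha>"
    and rho_less: "\<delta> * (1 + c * \<xi>) < 1"
    and norm_opow_C: "\<And>j. j < Suc m \<Longrightarrow> norm (opow j C) \<le> e"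
  shows "norm (Z (Suc m) - (opow (Suc m) C o\<^sub>L P))
    \<le> \<xi> * (real (Suc m) * \<alpha> + c * \<delta> / (1 - \<delta> * (1 + c * \<xi>)))
      + real (Suc m) * e * norm ((P o\<^sub>L T o\<^sub>L P) - (C o\<^sub>L P))
      + (\<xi> * norm (R 0) + (\<alpha> + c * \<delta> * (\<delta> * (1 + c * \<xi>)) ^ m) * (1 + \<xi> * norm (R 0)))"
proof -
  let ?\<rho> = "\<delta> * (1 + c * \<xi>)"
  let ?B = "P o\<^sub>L T o\<^sub>L P"
  have rho_nonneg: "0 \<le> ?\<rho>"
    using delta_nonneg c_nonneg xi_nonneg by simp
  have norm_Z_R1: "norm (Z j o\<^sub>L R 1) \<le> \<alpha> + c * \<delta> * ?\<rho> ^ j" for j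
    using norm_Z_comp_R_Suc_le[OF alpha_nonneg alpha_fixed, of j 0] by simp
  have "(\<Sum>j<Suc m. ?\<rho> ^ j) \<le> (\<Sum>j. ?\<rho> ^ j)"
    using rho_nonneg rho_less by (intro sum_le_suminf summable_geometric) auto
  also have "\<dots> = 1 / (1 - ?\<rho>)"
    using rho_nonneg rho_less by (intro suminf_geometric) simp
  finally have geometric: "(\<Sum>j<Suc m. ?\<rho> ^ j) \<le> 1 / (1 - ?\<rho>)" .
  have "(\<Sum>j<Suc m. norm (Z j o\<^sub>L R 1)) \<le> (\<Sum>j<Suc m. \<alpha> + c * \<delta> * ?\<rho> ^ j)"
    by (intro sum_mono norm_Z_R1)
  also have "\<dots> = real (Suc m) * \<alpha> + c * \<delta> * (\<Sum>j<Suc m. ?\<rho> ^ j)"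
    by (simp add: sum.distrib sum_distrib_left del: sum.lessThan_Suc)
  also have "\<dots> \<le> real (Suc m) * \<alpha> + c * \<delta> * (1 / (1 - ?\<rho>))"
    using geometric c_nonneg delta_nonneg by (intro add_left_mono mult_left_mono) simp_all
  finally have sum_Z_R1: "(\<Sum>j<Suc m. norm (Z j o\<^sub>L R 1)) \<le> real (Suc m) * \<alpha> + c * \<delta> / (1 - ?\<rho>)"
    by simp
  have split: "Z (Suc m) - (opow (Suc m) C o\<^sub>L P)
      = ((Z (Suc m) o\<^sub>L P) - (P o\<^sub>L opow (Suc m) ?B))
        + ((P o\<^sub>L opow (Suc m) ?B) - (opow (Suc m) C o\<^sub>L P)) + (Z (Suc m) o\<^sub>L R 0)"
    by (subst Z_split[of "Suc m"]) (simp add: algebra_simps)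
  have first: "norm ((Z (Suc m) o\<^sub>L P) - (P o\<^sub>L opow (Suc m) ?B))
      \<le> \<xi> * (real (Suc m) * \<alpha> + c * \<delta> / (1 - ?\<rho>))"
    by (rule order_trans[OF norm_Z_comp_P_minus_le mult_left_mono[OF sum_Z_R1 xi_nonneg]])
  have second: "norm ((P o\<^sub>L opow (Suc m) ?B) - (opow (Suc m) C o\<^sub>L P))
      \<le> real (Suc m) * e * norm (?B - (C o\<^sub>L P))"
    by (rule norm_compressed_opow_minus_le[OF _ norm_PTP norm_opow_C])
      (simp add: blinfun_compose_assoc[symmetric] P_idem)
  have third: "norm (Z (Suc m) o\<^sub>L R 0)
      \<le> \<xi> * norm (R 0) + (\<alpha> + c * \<delta> * ?\<rho> ^ m) * (1 + \<xi> * norm (R 0))"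
    by (rule order_trans[OF norm_Z_Suc_comp_R0_le add_left_mono[OF mult_right_mono[OF norm_Z_R1]]])
      (use xi_nonneg in simp)
  show ?thesis
    unfolding split using first second third by (rule norm_triangle_le3)
qed

end

lemma exp_minus_one_le_small:
  fixes x :: real
  assumes "0 \<le> x" and "x \<le> 1/20"
  shows "exp x - 1 \<le> 21/20 * x"
proof -
  have "exp x - 1 \<le> x + x\<^sup>2"
    using exp_bound[of x] assms by simp
  moreover have "x\<^sup>2 \<le> x / 20"
    using mult_left_mono[OF assms(2) assms(1)] by (simp add: power2_eq_square)
  ultimately show ?thesis by simp
qed

lemma exp_taylor2_remainder_le:
  fixes x :: real
  assumes "0 \<le> x"
  shows "2 * (exp x - 1 - x) \<le> x\<^sup>2 * exp x"
proof -
  obtain s where s: "\<bar>s\<bar> \<le> \<bar>x\<bar>" "exp x = (\<Sum>m<2. x ^ m / fact m) + exp s / fact 2 * x ^ 2"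
    using Maclaurin_exp_le[of x 2] by blast
  have remainder: "exp x - 1 - x = exp s / 2 * x\<^sup>2"
    using s(2) by (simp add: numeral_2_eq_2)
  have "exp s * x\<^sup>2 \<le> exp x * x\<^sup>2"
    using s(1) assms by (intro mult_right_mono) auto
  then show ?thesis
    unfolding remainder by (simp add: mult.commute)
qed

text \<open>
  Admissible values of \<open>x = (t / n) \<parallel>L\<parallel>\<close>: \<open>x \<le> 1/20\<close> linearises \<open>e\<^sup>x - 1\<close>,
  \<open>12 c x \<le> 1 - \<delta>\<close> keeps the perturbed rate \<open>\<delta> (1 + c (e\<^sup>x - 1))\<close> below \<open>1\<close>, the third
  bound controls the first \<open>\<lceil>4 c\<rceil>\<close> steps of the transient term, and \<open>x \<le> \<delta>\<close> absorbs the
  cubic remainder.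
\<close>

definition step_limit :: "real \<Rightarrow> real \<Rightarrow> real" where
  "step_limit c \<delta> =
     min (1/20) (min ((1 - \<delta>) / (12 * c)) (min (1 / (2 ^ (nat \<lceil>4 * c\<rceil> + 1) * c)) \<delta>))"

lemma step_limit_pos: "0 < c \<Longrightarrow> 0 < \<delta> \<Longrightarrow> \<delta> < 1 \<Longrightarrow> 0 < step_limit c \<delta>"
  by (simp add: step_limit_def)

locale small_step =
  fixes c \<delta> x :: real
  assumes c_gt_1: "1 < c" and delta_pos: "0 < \<delta>" and delta_less_1: "\<delta> < 1"
    and x_nonneg: "0 \<le> x" and x_le_step_limit: "x \<le> step_limit c \<delta>"
begin

definition \<xi> where "\<xi> = exp x - 1"
definition \<rho> where "\<rho> = \<delta> * (1 + c * \<xi>)"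
\<comment> \<open>An explicit solution of the fixed-point inequality \<open>alpha_fixed\<close> below.\<close>
definition \<alpha> where "\<alpha> = 2 * c * \<delta> / (1 - \<delta>) * \<xi>"
abbreviation N where "N \<equiv> nat \<lceil>4 * c\<rceil>"

lemma x_le: "x \<le> 1/20" "12 * c * x \<le> 1 - \<delta>" "2 ^ (N + 1) * c * x \<le> 1" "x \<le> \<delta>"
proof -
  show "x \<le> 1/20" "x \<le> \<delta>"
    using x_le_step_limit by (auto simp: step_limit_def)
  have "x \<le> (1 - \<delta>) / (12 * c)" "x \<le> 1 / (2 ^ (N + 1) * c)"
    using x_le_step_limit by (auto simp: step_limit_def)
  then show "12 * c * x \<le> 1 - \<delta>" "2 ^ (N + 1) * c * x \<le> 1"
    using c_gt_1 by (simp_all add: le_divide_eq mult.commute)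
qed

lemma N_ge: "4 * c \<le> real N"
  by linarith

lemma xi_ge: "x \<le> \<xi>"
  using exp_ge_add_one_self[of x] unfolding \<xi>_def by linarith

lemma xi_nonneg: "0 \<le> \<xi>"
  using xi_ge x_nonneg by linarith

lemma xi_le: "\<xi> \<le> 21/20 * x"
  using exp_minus_one_le_small[OF x_nonneg x_le(1)] unfolding \<xi>_def .

lemma c_xi_le: "11 * (c * \<xi>) \<le> 1 - \<delta>"
proof -
  have "c * \<xi> \<le> c * (21/20 * x)"
    using xi_le c_gt_1 by (intro mult_left_mono) auto
  then show ?thesis
    using x_le(2) delta_less_1 by (simp add: algebra_simps)
qed

lemma rho_nonneg: "0 \<le> \<rho>"
  using delta_pos c_gt_1 xi_nonneg by (simp add: \<rho>_def)

lemma rho_le: "\<rho> \<le> \<delta> + c * \<xi>"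
proof -
  have "\<delta> * (c * \<xi>) \<le> c * \<xi>"
    using delta_pos delta_less_1 c_gt_1 xi_nonneg by (intro mult_left_le_one_le) auto
  then show ?thesis by (simp add: \<rho>_def algebra_simps)
qed

lemma rho_less_1: "\<rho> < 1"
  using rho_le c_xi_le delta_pos delta_less_1 c_gt_1 xi_nonneg by linarith

lemma alpha_nonneg: "0 \<le> \<alpha>"
  using c_gt_1 delta_pos delta_less_1 xi_nonneg by (simp add: \<alpha>_def)

lemma alpha_fixed: "\<delta> * (\<xi> * c * (1 + \<alpha>) + \<alpha>) \<le> \<alpha>"
proof -
  have alpha_eq: "\<alpha> * (1 - \<delta>) = 2 * \<delta> * (c * \<xi>)"
    using delta_less_1 by (simp add: \<alpha>_def field_simps)
  have "2 * \<delta> * (c * \<xi>) \<le> 2 * 1 * ((1 - \<delta>) / 11)"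
    using c_xi_le delta_pos delta_less_1 c_gt_1 xi_nonneg by (intro mult_mono) auto
  then have "\<alpha> * (1 - \<delta>) \<le> 1 * (1 - \<delta>)"
    unfolding alpha_eq using delta_less_1 by simp
  then have "\<alpha> \<le> 1"
    using delta_less_1 by (simp add: mult_le_cancel_right)
  then have "\<delta> * (c * \<xi>) * (1 + \<alpha>) \<le> \<delta> * (c * \<xi>) * 2"
    using delta_pos c_gt_1 xi_nonneg by (intro mult_left_mono) auto
  also have "\<dots> = \<alpha> * (1 - \<delta>)"
    using alpha_eq by simp
  finally show ?thesis
    by (simp add: algebra_simps)
qed

lemma xi_cp_le: "1 \<le> cp \<Longrightarrow> cp \<le> 2 \<Longrightarrow> \<xi> * cp \<le> 21/200"
  using xi_le x_le(1) xi_nonneg mult_mono[of \<xi> "21/20 * (1/20)" cp 2] by simp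

definition \<gamma> where "\<gamma> = 1 / (1 - \<delta>)"

lemma gamma_ge_1: "1 \<le> \<gamma>"
  using delta_pos delta_less_1 by (simp add: \<gamma>_def)

lemma alpha_eq: "\<alpha> = 2 * (c * \<delta> * \<gamma>) * \<xi>"
  by (simp add: \<alpha>_def \<gamma>_def)

definition base_growth :: "nat \<Rightarrow> real" where
  "base_growth n = \<delta> / (1 - \<delta>) * exp (6 * c * (real n * x) / (1 - \<delta>)) / real n"

definition growth_term :: "nat \<Rightarrow> real \<Rightarrow> real \<Rightarrow> real" where
  "growth_term n \<delta>' cp = 2 * \<delta>' / (1 - \<delta>') * (exp (6 * (real n * x) * cp * c / (\<delta>' - \<delta>)) / real n)"

lemma growth_term_alt:
  "growth_term n \<delta>' cp = 2 * (\<delta>' / (1 - \<delta>') * exp (6 * (real n * x) * cp * c / (\<delta>' - \<delta>))) / real n"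
  by (simp add: growth_term_def)

lemma growth_term_nonneg: "0 < \<delta>' \<Longrightarrow> \<delta>' < 1 \<Longrightarrow> 0 \<le> growth_term n \<delta>' cp"
  by (simp add: growth_term_def)

lemma exp_le_growth_term:
  assumes "\<delta> < \<delta>'" "\<delta>' < 1" "1 \<le> cp" "y \<le> 6 * (real n * x) * c / (\<delta>' - \<delta>)"
  shows "2 * (\<delta> * exp y) / real n \<le> growth_term n \<delta>' cp"
proof -
  have "\<delta>' \<le> \<delta>' / (1 - \<delta>')"
    using assms(1,2) delta_pos by (simp add: le_divide_eq mult_le_cancel_left1)
  then have "\<delta> \<le> \<delta>' / (1 - \<delta>')"
    using assms(1) by linarith
  moreover have "y \<le> 6 * (real n * x) * cp * c / (\<delta>' - \<delta>)"
  proof -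
    have "6 * (real n * x) * c \<le> 6 * (real n * x) * cp * c"
      using mult_left_mono[OF assms(3), of "6 * (real n * x) * c"] x_nonneg c_gt_1
      by (simp add: mult_ac)
    then show ?thesis
      using assms(1) by (intro order_trans[OF assms(4)] divide_right_mono) auto
  qed
  ultimately have "\<delta> * exp y \<le> \<delta>' / (1 - \<delta>') * exp (6 * (real n * x) * cp * c / (\<delta>' - \<delta>))"
    using delta_pos by (intro mult_mono) auto
  then show ?thesis
    unfolding growth_term_alt by (rule divide_right_mono[OF mult_left_mono]) auto
qed

lemma base_growth_le_growth_term:
  assumes "\<delta> < \<delta>'" "\<delta>' < 1" "1 \<le> cp"
  shows "2 * base_growth n \<le> growth_term n \<delta>' cp"
proof -
  have "\<delta> / (1 - \<delta>) \<le> \<delta>' / (1 - \<delta>')"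
    using assms delta_pos by (intro frac_le) auto
  moreover have "6 * c * (real n * x) / (1 - \<delta>) \<le> 6 * (real n * x) * cp * c / (\<delta>' - \<delta>)"
  proof -
    have "6 * c * (real n * x) / (1 - \<delta>) \<le> 6 * c * (real n * x) / (\<delta>' - \<delta>)"
      using assms x_nonneg c_gt_1 by (intro divide_left_mono) auto
    also have "\<dots> \<le> 6 * (real n * x) * cp * c / (\<delta>' - \<delta>)"
      using mult_left_mono[OF assms(3), of "6 * (real n * x) * c"] assms x_nonneg c_gt_1
      by (intro divide_right_mono) (simp_all add: mult_ac)
    finally show ?thesis .
  qed
  ultimately have "\<delta> / (1 - \<delta>) * exp (6 * c * (real n * x) / (1 - \<delta>))
      \<le> \<delta>' / (1 - \<delta>') * exp (6 * (real n * x) * cp * c / (\<delta>' - \<delta>))"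
    using assms delta_pos delta_less_1 by (intro mult_mono) auto
  then have "2 * (\<delta> / (1 - \<delta>) * exp (6 * c * (real n * x) / (1 - \<delta>))) / real n
      \<le> growth_term n \<delta>' cp"
    unfolding growth_term_alt by (rule divide_right_mono[OF mult_left_mono]) auto
  then show ?thesis
    by (simp add: base_growth_def)
qed

text \<open>
  If \<open>\<rho> > \<delta>'\<close>, the gap \<open>\<delta>' - \<delta>\<close> is below \<open>c \<xi>\<close>, which forces \<open>growth_term\<close> to be of
  order \<open>exp (3 n) / n\<close>; this beats \<open>c n\<close> once \<open>n \<ge> 4 c\<close>, and for fewer steps the bound
  \<open>2 ^ (N + 1) c x \<le> 1\<close> is used instead.
\<close>

lemma transient_term_le_few_steps:
  assumes n: "n = Suc m" and few: "m < N"
    and gap: "\<delta>' - \<delta> \<le> c * \<xi>" "\<delta> < \<delta>'" and xi_pos: "0 < \<xi>"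
  shows "111/100 * (c * \<delta> * \<rho> ^ m) \<le> 2 * c / (\<delta>' - \<delta>) * \<delta>' ^ n"
proof -
  have pow_le: "(1 + c * \<xi>) ^ m \<le> 2 ^ N"
  proof -
    have "c * \<xi> \<le> 1"
      using c_xi_le delta_pos by linarith
    then have "(1 + c * \<xi>) ^ m \<le> 2 ^ m"
      using c_gt_1 xi_nonneg by (intro power_mono) auto
    also have "(2::real) ^ m \<le> 2 ^ N"
      using few by (intro power_increasing) auto
    finally show ?thesis .
  qed
  have small: "c * 2 ^ N * \<xi> \<le> 21/40"
  proof -
    have "c * 2 ^ N * \<xi> \<le> c * 2 ^ N * (21/20 * x)"
      using xi_le c_gt_1 by (intro mult_left_mono) auto
    also have "\<dots> = 21/40 * (2 ^ (N + 1) * c * x)"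
      by simp
    finally show ?thesis
      using x_le(3) by linarith
  qed
  have "111/100 * (c * \<delta> * \<rho> ^ m) = 111/100 * \<delta> ^ n * (c * (1 + c * \<xi>) ^ m)"
    using n by (simp add: \<rho>_def power_mult_distrib)
  also have "\<dots> \<le> 111/100 * \<delta> ^ n * (c * 2 ^ N)"
    using pow_le c_gt_1 delta_pos by (intro mult_left_mono) auto
  also have "\<dots> = 111/100 * \<delta> ^ n * (c * 2 ^ N * \<xi>) / \<xi>"
    using xi_pos by simp
  also have "\<dots> \<le> 111/100 * \<delta> ^ n * (21/40) / \<xi>"
    using small xi_pos delta_pos by (intro divide_right_mono mult_left_mono) auto
  also have "\<dots> \<le> 2 * c * \<delta> ^ n / (c * \<xi>)"
    using xi_pos c_gt_1 delta_pos by (simp add: field_simps)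
  also have "\<dots> \<le> 2 * c * \<delta> ^ n / (\<delta>' - \<delta>)"
    using gap delta_pos c_gt_1 by (intro frac_le) auto
  also have "\<dots> \<le> 2 * c / (\<delta>' - \<delta>) * \<delta>' ^ n"
    using gap delta_pos c_gt_1 by (simp add: divide_right_mono power_mono)
  finally show ?thesis .
qed

lemma transient_term_le_many_steps:
  assumes n: "n = Suc m" and many: "N \<le> m"
    and gap: "\<delta>' - \<delta> \<le> c * \<xi>" and delta': "\<delta> < \<delta>'" "\<delta>' < 1" and cp: "1 \<le> cp"
  shows "111/100 * (c * \<delta> * \<rho> ^ m) \<le> growth_term n \<delta>' cp / 4"
proof -
  have n_ge: "4 * c \<le> real n"
    using many N_ge n by linarith
  have "\<rho> ^ m \<le> 1"
    using rho_less_1 rho_nonneg by (intro power_le_one) auto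
  then have "111/100 * (c * \<delta> * \<rho> ^ m) \<le> 111/100 * (c * \<delta>)"
    using c_gt_1 delta_pos by (simp add: mult_left_le)
  also have "\<dots> \<le> 2 * (\<delta> * exp (3 * real n)) / real n / 4"
  proof -
    have "111/100 * c * real n \<le> 111/100 * (real n / 4) * real n"
      using n_ge by (intro mult_right_mono) auto
    also have "\<dots> \<le> (3 * real n)\<^sup>2 / 2 / 2"
      by (simp add: power2_eq_square)
    also have "\<dots> \<le> exp (3 * real n) / 2"
      using exp_lower_Taylor_quadratic[of "3 * real n"] by simp
    finally have "111/100 * c * real n * \<delta> \<le> exp (3 * real n) / 2 * \<delta>"
      using delta_pos by (intro mult_right_mono) auto
    then show ?thesis
      using n by (simp add: field_simps)
  qed
  also have "\<dots> \<le> growth_term n \<delta>' cp / 4"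
  proof -
    have "c * \<xi> \<le> c * (21/20 * x)"
      using xi_le c_gt_1 by (intro mult_left_mono) auto
    then have "(\<delta>' - \<delta>) * (3 * real n) \<le> c * (21/20 * x) * (3 * real n)"
      using gap by (intro mult_right_mono) auto
    also have "\<dots> \<le> 6 * (real n * x) * c"
      using c_gt_1 x_nonneg by (simp add: mult_ac)
    finally have "3 * real n \<le> 6 * (real n * x) * c / (\<delta>' - \<delta>)"
      using delta' by (simp add: le_divide_eq mult.commute)
    then show ?thesis
      by (intro divide_right_mono exp_le_growth_term delta' cp) simp_all
  qed
  finally show ?thesis .
qed

lemma transient_term_le:
  assumes n: "n = Suc m" and delta': "\<delta> < \<delta>'" "\<delta>' < 1" and cp: "1 \<le> cp"
  shows "111/100 * (c * \<delta> * \<rho> ^ m) \<le> 2 * c / (\<delta>' - \<delta>) * \<delta>' ^ n + growth_term n \<delta>' cp / 4"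
proof -
  have C_nonneg: "0 \<le> 2 * c / (\<delta>' - \<delta>) * \<delta>' ^ n"
    using delta' delta_pos c_gt_1 by simp
  have G_nonneg: "0 \<le> growth_term n \<delta>' cp"
    using delta' delta_pos by (intro growth_term_nonneg) auto
  show ?thesis
  proof (cases "\<rho> \<le> \<delta>'")
    case True
    have "\<delta> \<le> \<rho>"
      using delta_pos c_gt_1 xi_nonneg by (simp add: \<rho>_def)
    then have "c * \<delta> * \<rho> ^ m \<le> c * \<rho> ^ n"
      using c_gt_1 delta_pos rho_nonneg n by (simp add: mult_right_mono)
    also have "\<dots> \<le> c * \<delta>' ^ n"
      using True rho_nonneg c_gt_1 by (intro mult_left_mono power_mono) auto
    also have "\<dots> \<le> c * \<delta>' ^ n / (\<delta>' - \<delta>)"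
      using delta' delta_pos c_gt_1 by (intro mult_imp_le_div_pos mult_left_le) auto
    finally have "c * \<delta> * \<rho> ^ m \<le> c * \<delta>' ^ n / (\<delta>' - \<delta>)" .
    moreover have "0 \<le> c * \<delta> * \<rho> ^ m"
      using c_gt_1 delta_pos rho_nonneg by simp
    moreover have "2 * c / (\<delta>' - \<delta>) * \<delta>' ^ n = 2 * (c * \<delta>' ^ n / (\<delta>' - \<delta>))"
      by simp
    ultimately show ?thesis
      using G_nonneg by linarith
  next
    case False
    then have gap: "\<delta>' - \<delta> < \<delta> * c * \<xi>"
      by (simp add: \<rho>_def algebra_simps)
    then have "0 < \<delta> * c * \<xi>"
      using delta' by linarith
    then have xi_pos: "0 < \<xi>"
      using delta_pos c_gt_1 xi_nonneg by (auto simp: zero_less_mult_iff)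
    have "\<delta> * c * \<xi> \<le> c * \<xi>"
      using mult_left_le_one_le[of "c * \<xi>" \<delta>] delta_pos delta_less_1 c_gt_1 xi_nonneg
      by (simp add: mult.assoc)
    then have gap_le: "\<delta>' - \<delta> \<le> c * \<xi>"
      using gap by linarith
    show ?thesis
    proof (cases "m < N")
      case True
      then show ?thesis
        using transient_term_le_few_steps[OF n True gap_le delta'(1) xi_pos] G_nonneg by linarith
    next
      case False
      then show ?thesis
        using transient_term_le_many_steps[OF n _ gap_le delta' cp] C_nonneg by linarith
    qed
  qed
qed

lemma inverse_one_minus_rho_le: "1 / (1 - \<rho>) \<le> 11/10 * \<gamma>"
proof -
  have "10 * (1 - \<delta>) \<le> 11 * (1 - \<rho>)"
    using rho_le c_xi_le by (simp add: algebra_simps)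
  then have "10/11 * (1 - \<delta>) \<le> 1 - \<rho>"
    by simp
  then have "1 / (1 - \<rho>) \<le> 1 / (10/11 * (1 - \<delta>))"
    using delta_less_1 by (intro divide_left_mono) auto
  then show ?thesis
    by (simp add: \<gamma>_def)
qed

lemma first_order_linear_le:
  "\<xi> * (c * \<delta> / (1 - \<rho>)) + 111/100 * \<alpha> \<le> 6 * (c * \<delta> * \<gamma>) * \<gamma> * x"
proof -
  have cdg_nonneg: "0 \<le> c * \<delta> * \<gamma>"
    using c_gt_1 delta_pos gamma_ge_1 by simp
  have "\<xi> * (c * \<delta> / (1 - \<rho>)) = \<xi> * (c * \<delta>) * (1 / (1 - \<rho>))"
    by simp
  also have "\<dots> \<le> \<xi> * (c * \<delta>) * (11/10 * \<gamma>)"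
    using inverse_one_minus_rho_le c_gt_1 delta_pos xi_nonneg by (intro mult_left_mono) auto
  finally have "\<xi> * (c * \<delta> / (1 - \<rho>)) \<le> \<xi> * (c * \<delta> * (11/10 * \<gamma>))"
    by (simp add: mult_ac)
  then have "\<xi> * (c * \<delta> / (1 - \<rho>)) + 111/100 * \<alpha> \<le> 332/100 * (c * \<delta> * \<gamma>) * \<xi>"
    by (simp add: alpha_eq algebra_simps)
  also have "\<dots> \<le> 332/100 * (c * \<delta> * \<gamma>) * (21/20 * x)"
    using xi_le cdg_nonneg by (intro mult_left_mono) auto
  also have "\<dots> = 3486/1000 * (c * \<delta> * \<gamma> * x)"
    by simp
  also have "\<dots> \<le> 6 * (c * \<delta> * \<gamma> * x) * \<gamma>"
  proof -
    have "0 \<le> c * \<delta> * \<gamma> * x"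
      using cdg_nonneg x_nonneg by (rule mult_nonneg_nonneg)
    then show ?thesis
      using mult_left_mono[OF gamma_ge_1, of "6 * (c * \<delta> * \<gamma> * x)"] by linarith
  qed
  also have "\<dots> = 6 * (c * \<delta> * \<gamma>) * \<gamma> * x"
    by (simp add: mult_ac)
  finally show ?thesis .
qed

lemma first_order_quadratic_le:
  "\<xi> * (real n * \<alpha>) \<le> 18 * (c * \<delta> * \<gamma>) * (c * \<gamma> * \<gamma>) * real n * x\<^sup>2"
proof -
  have cdg_nonneg: "0 \<le> c * \<delta> * \<gamma>"
    using c_gt_1 delta_pos gamma_ge_1 by simp
  have "1 * 1 * 1 \<le> c * \<gamma> * \<gamma>"
    using c_gt_1 gamma_ge_1 by (intro mult_mono) auto
  then have cgg: "1 \<le> c * \<gamma> * \<gamma>"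
    by simp
  have "\<xi> * (real n * \<alpha>) = 2 * (c * \<delta> * \<gamma>) * real n * \<xi>\<^sup>2"
    by (simp add: alpha_eq power2_eq_square)
  also have "\<dots> \<le> 2 * (c * \<delta> * \<gamma>) * real n * (21/20 * x)\<^sup>2"
    using xi_le xi_nonneg cdg_nonneg by (intro mult_left_mono power_mono) auto
  also have "\<dots> = 441/200 * ((c * \<delta> * \<gamma>) * real n * x\<^sup>2)"
    by (simp add: power2_eq_square)
  also have "\<dots> \<le> 18 * ((c * \<delta> * \<gamma>) * real n * x\<^sup>2) * (c * \<gamma> * \<gamma>)"
  proof -
    have "0 \<le> (c * \<delta> * \<gamma>) * real n * x\<^sup>2"
      using cdg_nonneg by simp
    then show ?thesis
      using mult_left_mono[OF cgg, of "18 * ((c * \<delta> * \<gamma>) * real n * x\<^sup>2)"] by linarith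
  qed
  also have "\<dots> = 18 * (c * \<delta> * \<gamma>) * (c * \<gamma> * \<gamma>) * real n * x\<^sup>2"
    by (simp add: mult_ac)
  finally show ?thesis .
qed

lemma first_order_terms_le:
  assumes "1 \<le> n"
  shows "\<xi> * (real n * \<alpha> + c * \<delta> / (1 - \<rho>)) + 111/100 * \<alpha> \<le> base_growth n"
proof -
  define y where "y = 6 * c * (real n * x) / (1 - \<delta>)"
  have y_eq: "y = 6 * c * \<gamma> * real n * x"
    by (simp add: y_def \<gamma>_def)
  \<comment> \<open>The two bounds are the first two Taylor terms of \<open>exp y\<close>, up to the factor \<open>\<delta> \<gamma> / n\<close>.\<close>
  have "6 * (c * \<delta> * \<gamma>) * \<gamma> * x + 18 * (c * \<delta> * \<gamma>) * (c * \<gamma> * \<gamma>) * real n * x\<^sup>2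
      = \<delta> * \<gamma> * (y + y\<^sup>2 / 2) / real n"
    using assms unfolding y_eq by (simp add: power2_eq_square field_simps)
  also have "\<dots> \<le> \<delta> * \<gamma> * exp y / real n"
  proof -
    have "0 \<le> y"
      using c_gt_1 gamma_ge_1 x_nonneg by (simp add: y_eq)
    then have "y + y\<^sup>2 / 2 \<le> exp y"
      using exp_lower_Taylor_quadratic[of y] by simp
    then show ?thesis
      using delta_pos gamma_ge_1 by (intro divide_right_mono mult_left_mono) auto
  qed
  also have "\<dots> = base_growth n"
    by (simp add: base_growth_def \<gamma>_def y_def)
  finally show ?thesis
    using first_order_linear_le first_order_quadratic_le[of n] by (simp add: distrib_left)
qed

lemma cubic_term_le:
  assumes n: "1 \<le> n" and eb: "0 \<le> eb" "eb \<le> exp (real n * x)"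
  shows "real n * x\<^sup>2 * (1 + eb) * \<xi> \<le> base_growth n / 2"
proof -
  define u where "u = real n * x"
  have u_nonneg: "0 \<le> u"
    using x_nonneg by (simp add: u_def)
  have nx2: "real n * x\<^sup>2 = u\<^sup>2 / real n"
    using n by (simp add: u_def power2_eq_square)
  have "1 \<le> exp u" and "eb \<le> exp u"
    using u_nonneg eb by (simp_all add: u_def)
  then have "1 + eb \<le> 2 * exp u"
    by linarith
  then have "real n * x\<^sup>2 * (1 + eb) * \<xi> \<le> real n * x\<^sup>2 * (2 * exp u) * (21/20 * x)"
    using eb xi_le xi_nonneg x_nonneg by (intro mult_mono) auto
  also have "\<dots> = 21/10 * exp u * u\<^sup>2 * x / real n"
    using n by (simp add: nx2 field_simps)
  also have "\<dots> \<le> 21/10 * exp u * (2/25 * exp (5 * u)) * x / real n"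
  proof -
    have "(5 * u)\<^sup>2 / 2 \<le> exp (5 * u)"
      using exp_lower_Taylor_quadratic[of "5 * u"] u_nonneg by simp
    then have "u\<^sup>2 \<le> 2/25 * exp (5 * u)"
      by (simp add: power_mult_distrib)
    then show ?thesis
      using x_nonneg by (intro divide_right_mono mult_right_mono mult_left_mono) auto
  qed
  also have "\<dots> = 21/125 * exp (6 * u) * x / real n"
  proof -
    have "exp u * exp (5 * u) = exp (6 * u)"
      by (simp add: mult_exp_exp)
    then show ?thesis
      by (simp add: mult_ac)
  qed
  also have "\<dots> \<le> 1/2 * (\<delta> / (1 - \<delta>) * exp (6 * c * u / (1 - \<delta>))) / real n"
  proof -
    have "6 * u \<le> 6 * c * u"
      using mult_right_mono[of 1 c u] c_gt_1 u_nonneg by simp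
    also have "\<dots> \<le> 6 * c * u / (1 - \<delta>)"
      using c_gt_1 u_nonneg delta_pos delta_less_1 by (intro mult_imp_le_div_pos mult_left_le) auto
    finally have "exp (6 * u) \<le> exp (6 * c * u / (1 - \<delta>))"
      by simp
    moreover have "\<delta> \<le> \<delta> / (1 - \<delta>)"
      using delta_pos delta_less_1 by (intro mult_imp_le_div_pos mult_left_le) auto
    then have "x \<le> \<delta> / (1 - \<delta>)"
      using x_le(4) by linarith
    ultimately have "21/125 * exp (6 * u) * x \<le> 1/2 * exp (6 * c * u / (1 - \<delta>)) * (\<delta> / (1 - \<delta>))"
      using x_nonneg by (intro mult_mono) auto
    then show ?thesis
      by (intro divide_right_mono) (auto simp: mult_ac)
  qed
  also have "\<dots> = base_growth n / 2"
    by (simp add: base_growth_def u_def)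
  finally show ?thesis .
qed

lemma second_order_terms_le:
  assumes n: "1 \<le> n" and cp: "1 \<le> cp" "cp \<le> 2" and eb: "0 \<le> eb" "eb \<le> exp (real n * x)"
  shows "\<xi> * cp + real n * eb * (2 * (exp x - 1 - x))
      \<le> cp * x + (cp + (1 + eb) * (1 + cp\<^sup>2)) / 2 * ((real n * x)\<^sup>2 / real n) + base_growth n / 2"
proof -
  have linear: "\<xi> * cp \<le> cp * x + 2 * (\<xi> - x)"
    using mult_right_mono[OF cp(2), of "\<xi> - x"] xi_ge by (simp add: algebra_simps)
  have "real n * eb * (2 * (exp x - 1 - x)) + 2 * (\<xi> - x) = (1 + real n * eb) * (2 * (exp x - 1 - x))"
    by (simp add: \<xi>_def algebra_simps)
  also have "\<dots> \<le> (1 + real n * eb) * (x\<^sup>2 * exp x)"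
    using exp_taylor2_remainder_le[OF x_nonneg] eb n by (intro mult_left_mono) auto
  also have "\<dots> \<le> (real n * (1 + eb)) * (x\<^sup>2 * exp x)"
    using n eb by (intro mult_right_mono) (auto simp: algebra_simps)
  also have "\<dots> = real n * x\<^sup>2 * (1 + eb) + real n * x\<^sup>2 * (1 + eb) * \<xi>"
    by (simp add: \<xi>_def algebra_simps)
  finally have quadratic: "real n * eb * (2 * (exp x - 1 - x)) + 2 * (\<xi> - x)
      \<le> real n * x\<^sup>2 * (1 + eb) + real n * x\<^sup>2 * (1 + eb) * \<xi>" .
  have main: "real n * x\<^sup>2 * (1 + eb) \<le> (cp + (1 + eb) * (1 + cp\<^sup>2)) / 2 * ((real n * x)\<^sup>2 / real n)"
  proof -
    have "(1 + eb) * 2 \<le> (1 + eb) * (1 + cp\<^sup>2)"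
      using cp eb by (intro mult_left_mono) (auto simp: one_le_power)
    then have "1 + eb \<le> (cp + (1 + eb) * (1 + cp\<^sup>2)) / 2"
      using cp by simp
    then have "real n * x\<^sup>2 * (1 + eb) \<le> real n * x\<^sup>2 * ((cp + (1 + eb) * (1 + cp\<^sup>2)) / 2)"
      by (intro mult_left_mono) auto
    moreover have "real n * x\<^sup>2 = (real n * x)\<^sup>2 / real n"
      using n by (simp add: power2_eq_square)
    ultimately show ?thesis
      by (metis mult.commute)
  qed
  show ?thesis
    using linear quadratic main cubic_term_le[OF n eb] by simp
qed

lemma error_terms_le:
  assumes n: "n = Suc m" and delta': "\<delta> < \<delta>'" "\<delta>' < 1" and nx: "real n * x = t * K"
    and cp: "1 \<le> cp" "cp \<le> 2" and eb: "0 \<le> eb" "eb \<le> exp (real n * x)"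
  shows "\<xi> * (real n * \<alpha> + c * \<delta> / (1 - \<rho>)) + real n * eb * (2 * (exp x - 1 - x))
           + (\<xi> * cp + (\<alpha> + c * \<delta> * \<rho> ^ m) * (1 + \<xi> * cp))
         \<le> t * cp * K / real n + (cp + (1 + eb) * (1 + cp ^ 2)) / 2 * (t ^ 2 * K ^ 2 / real n)
           + 2 * c / (\<delta>' - \<delta>) * \<delta>' ^ n
           + 2 * \<delta>' / (1 - \<delta>') * (exp (6 * t * cp * c * K / (\<delta>' - \<delta>)) / real n)"
proof -
  have n_ge_1: "1 \<le> n"
    using n by simp
  have "(\<alpha> + c * \<delta> * \<rho> ^ m) * (1 + \<xi> * cp) \<le> (\<alpha> + c * \<delta> * \<rho> ^ m) * (111/100)"
    using xi_cp_le[OF cp] alpha_nonneg c_gt_1 delta_pos rho_nonneg by (intro mult_left_mono) auto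
  then have "(\<alpha> + c * \<delta> * \<rho> ^ m) * (1 + \<xi> * cp) \<le> 111/100 * \<alpha> + 111/100 * (c * \<delta> * \<rho> ^ m)"
    by (simp add: algebra_simps)
  then have "\<xi> * (real n * \<alpha> + c * \<delta> / (1 - \<rho>)) + real n * eb * (2 * (exp x - 1 - x))
           + (\<xi> * cp + (\<alpha> + c * \<delta> * \<rho> ^ m) * (1 + \<xi> * cp))
         \<le> cp * x + (cp + (1 + eb) * (1 + cp\<^sup>2)) / 2 * ((real n * x)\<^sup>2 / real n)
           + 2 * c / (\<delta>' - \<delta>) * \<delta>' ^ n + growth_term n \<delta>' cp"
    using first_order_terms_le[OF n_ge_1] second_order_terms_le[OF n_ge_1 cp eb]
      transient_term_le[OF n delta' cp(1)] base_growth_le_growth_term[OF delta' cp(1), of n]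
    by linarith
  also have "\<dots> = t * cp * K / real n + (cp + (1 + eb) * (1 + cp ^ 2)) / 2 * (t ^ 2 * K ^ 2 / real n)
           + 2 * c / (\<delta>' - \<delta>) * \<delta>' ^ n
           + 2 * \<delta>' / (1 - \<delta>') * (exp (6 * t * cp * c * K / (\<delta>' - \<delta>)) / real n)"
  proof -
    have linear: "cp * x = t * cp * K / real n"
      using nx n_ge_1 by (simp add: field_simps)
    have quadratic: "(real n * x)\<^sup>2 / real n = t ^ 2 * K ^ 2 / real n"
      unfolding nx by (simp add: power_mult_distrib)
    have growth: "growth_term n \<delta>' cp
        = 2 * \<delta>' / (1 - \<delta>') * (exp (6 * t * cp * c * K / (\<delta>' - \<delta>)) / real n)"
      unfolding growth_term_def nx by (simp add: mult_ac)
    show ?thesis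
      unfolding linear quadratic growth ..
  qed
  finally show ?thesis .
qed

end

lemma trotter_error_le_terms:
  fixes L M P :: "'a::banach op" and \<tau> \<xi> \<alpha> eb :: real
  assumes contractive: "norm (op_exp (\<tau> *\<^sub>R L)) \<le> 1" and tau_nonneg: "0 \<le> \<tau>"
    and norm_M: "norm M \<le> 1" and P_idem: "P o\<^sub>L P = P" and M_P: "M o\<^sub>L P = P" and P_M: "P o\<^sub>L M = P"
    and norm_P: "norm P \<le> 1" and mixing: "\<And>k. norm (opow k M - P) \<le> c * \<delta> ^ k"
    and delta_nonneg: "0 \<le> \<delta>" and xi: "\<xi> = exp (\<tau> * norm L) - 1"
    and alpha: "0 \<le> \<alpha>" "\<delta> * (\<xi> * c * (1 + \<alpha>) + \<alpha>) \<le> \<alpha>" "\<delta> * (1 + c * \<xi>) < 1"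
    and eb: "\<And>j. j \<le> m \<Longrightarrow> norm (op_exp ((real j * \<tau>) *\<^sub>R (P o\<^sub>L L o\<^sub>L P))) \<le> eb"
  defines "n \<equiv> Suc m" and "x \<equiv> \<tau> * norm L" and "cp \<equiv> norm (id_blinfun - P)"
  shows "norm (opow n (M o\<^sub>L op_exp (\<tau> *\<^sub>R L)) - (op_exp ((real n * \<tau>) *\<^sub>R (P o\<^sub>L L o\<^sub>L P)) o\<^sub>L P))
    \<le> \<xi> * (real n * \<alpha> + c * \<delta> / (1 - \<delta> * (1 + c * \<xi>))) + real n * eb * (2 * (exp x - 1 - x))
      + (\<xi> * cp + (\<alpha> + c * \<delta> * (\<delta> * (1 + c * \<xi>)) ^ m) * (1 + \<xi> * cp))"
proof -
  define T where "T = op_exp (\<tau> *\<^sub>R L)"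
  define A where "A = P o\<^sub>L L o\<^sub>L P"
  interpret perturbed_mixing M P T c \<delta> \<xi>
  proof unfold_locales
    show "norm T \<le> 1"
      using contractive by (simp add: T_def)
    show "norm (T - id_blinfun) \<le> \<xi>"
      using norm_op_exp_minus_id_le[of "\<tau> *\<^sub>R L"] tau_nonneg by (simp add: T_def xi)
  qed (use P_idem M_P P_M norm_P norm_M mixing delta_nonneg in auto)
  let ?C = "op_exp (\<tau> *\<^sub>R A)"
  have Z_bound: "norm (Z n - (opow n ?C o\<^sub>L P))
      \<le> \<xi> * (real n * \<alpha> + c * \<delta> / (1 - \<delta> * (1 + c * \<xi>)))
        + real n * eb * norm ((P o\<^sub>L T o\<^sub>L P) - (?C o\<^sub>L P))
        + (\<xi> * norm (R 0) + (\<alpha> + c * \<delta> * (\<delta> * (1 + c * \<xi>)) ^ m) * (1 + \<xi> * norm (R 0)))"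
    unfolding n_def using alpha eb by (intro norm_Z_minus_le) (simp_all add: opow_op_exp A_def)
  have "P o\<^sub>L (\<tau> *\<^sub>R L) o\<^sub>L P = \<tau> *\<^sub>R A"
    by (simp add: A_def blinfun_compose.scaleR_left blinfun_compose.scaleR_right)
  then have "norm ((P o\<^sub>L T o\<^sub>L P) - (?C o\<^sub>L P)) \<le> 2 * (exp x - 1 - x)"
    using norm_compression_op_exp_minus_le[OF P_idem norm_P, of "\<tau> *\<^sub>R L"] tau_nonneg
    by (simp add: T_def x_def)
  moreover have "0 \<le> eb"
    using order_trans[OF norm_ge_zero eb[of 0]] by simp
  ultimately have middle: "real n * eb * norm ((P o\<^sub>L T o\<^sub>L P) - (?C o\<^sub>L P))
      \<le> real n * eb * (2 * (exp x - 1 - x))"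
    by (intro mult_left_mono) auto
  have Z_eq: "Z n = opow n (M o\<^sub>L op_exp (\<tau> *\<^sub>R L))"
    unfolding Z_def by (simp only: T_def)
  have C_eq: "opow n ?C = op_exp ((real n * \<tau>) *\<^sub>R A)"
    by (rule opow_op_exp)
  have R0_eq: "norm (R 0) = cp"
    by (simp add: R_def cp_def)
  show ?thesis
    using Z_bound[unfolded Z_eq C_eq R0_eq] middle unfolding A_def by linarith
qed

lemma trotter_error_bound_proper_projection:
  fixes L M P :: "'a::banach op" and c \<delta> \<delta>' t :: real and n :: nat
  assumes contractive: "\<And>s. 0 \<le> s \<Longrightarrow> norm (op_exp (s *\<^sub>R L)) \<le> 1"
    and norm_M: "norm M \<le> 1" and P_idem: "P o\<^sub>L P = P" and M_P: "M o\<^sub>L P = P" and P_M: "P o\<^sub>L M = P"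
    and norm_P: "norm P \<le> 1" and proper: "P \<noteq> id_blinfun"
    and delta: "0 < \<delta>" "\<delta> < 1" and c_gt_1: "1 < c"
    and mixing: "\<And>k. norm (opow k M - P) \<le> c * \<delta> ^ k"
    and t: "0 \<le> t" and n: "1 \<le> n" and step: "t / real n * norm L \<le> step_limit c \<delta>"
    and delta': "\<delta> < \<delta>'" "\<delta>' < 1"
  defines "cp \<equiv> norm (id_blinfun - P)"
    and "eb \<equiv> SUP s\<in>{0..t}. norm (op_exp (s *\<^sub>R (P o\<^sub>L L o\<^sub>L P)))"
  shows "norm (opow n (M o\<^sub>L op_exp ((t / real n) *\<^sub>R L)) - (op_exp (t *\<^sub>R (P o\<^sub>L L o\<^sub>L P)) o\<^sub>L P))
      \<le> t * cp * norm L / real n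
        + (cp + (1 + eb) * (1 + cp ^ 2)) / 2 * (t ^ 2 * norm L ^ 2 / real n)
        + 2 * c / (\<delta>' - \<delta>) * \<delta>' ^ n
        + 2 * \<delta>' / (1 - \<delta>') * (exp (6 * t * cp * c * norm L / (\<delta>' - \<delta>)) / real n)"
proof -
  define \<tau> where "\<tau> = t / real n"
  define x where "x = \<tau> * norm L"
  have tau_nonneg: "0 \<le> \<tau>" and n_tau: "real n * \<tau> = t"
    using t n by (simp_all add: \<tau>_def)
  have x_nonneg: "0 \<le> x"
    using tau_nonneg by (simp add: x_def)
  have nx: "real n * x = t * norm L"
    using n_tau by (simp add: x_def mult.assoc[symmetric])
  interpret S: small_step c \<delta> x
    using c_gt_1 delta x_nonneg step by unfold_locales (simp_all add: x_def \<tau>_def)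
  obtain m where m: "n = Suc m"
    using n by (cases n) auto
  have eb: "\<And>s. s \<in> {0..t} \<Longrightarrow> norm (op_exp (s *\<^sub>R (P o\<^sub>L L o\<^sub>L P))) \<le> eb"
    "0 \<le> eb" "eb \<le> exp (real n * x)"
    using SUP_norm_op_exp_compression_bounds[OF t norm_P] unfolding eb_def nx by auto
  have eb_steps: "norm (op_exp ((real j * \<tau>) *\<^sub>R (P o\<^sub>L L o\<^sub>L P))) \<le> eb" if "j \<le> m" for j
  proof (rule eb(1))
    have "real j * \<tau> \<le> real n * \<tau>"
      using that m tau_nonneg by (intro mult_right_mono) auto
    then show "real j * \<tau> \<in> {0..t}"
      using tau_nonneg n_tau by simp
  qed
  have xi: "S.\<xi> = exp (\<tau> * norm L) - 1"
    unfolding S.\<xi>_def by (simp add: x_def)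
  have cp: "1 \<le> cp" "cp \<le> 2"
    using norm_id_minus_projection[OF P_idem norm_P proper] by (simp_all add: cp_def)
  note terms = trotter_error_le_terms[where m = m, OF contractive[OF tau_nonneg] tau_nonneg norm_M P_idem
      M_P P_M norm_P mixing _ xi S.alpha_nonneg S.alpha_fixed S.rho_less_1[unfolded S.\<rho>_def] eb_steps]
  have "norm (opow n (M o\<^sub>L op_exp ((t / real n) *\<^sub>R L)) - (op_exp (t *\<^sub>R (P o\<^sub>L L o\<^sub>L P)) o\<^sub>L P))
      \<le> S.\<xi> * (real n * S.\<alpha> + c * \<delta> / (1 - S.\<rho>)) + real n * eb * (2 * (exp x - 1 - x))
        + (S.\<xi> * cp + (S.\<alpha> + c * \<delta> * S.\<rho> ^ m) * (1 + S.\<xi> * cp))"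
    using terms[unfolded m[symmetric] n_tau, folded S.\<rho>_def x_def cp_def, unfolded \<tau>_def] delta
    by simp
  also have "\<dots> \<le> t * cp * norm L / real n
        + (cp + (1 + eb) * (1 + cp ^ 2)) / 2 * (t ^ 2 * norm L ^ 2 / real n)
        + 2 * c / (\<delta>' - \<delta>) * \<delta>' ^ n
        + 2 * \<delta>' / (1 - \<delta>') * (exp (6 * t * cp * c * norm L / (\<delta>' - \<delta>)) / real n)"
    by (rule S.error_terms_le[OF m delta' nx cp eb(2,3)])
  finally show ?thesis .
qed

lemma trotter_error_bound:
  fixes L M P :: "'a::banach op" and c \<delta> \<delta>' t :: real and n :: nat
  assumes contractive: "\<forall>s\<ge>0. norm (op_exp (s *\<^sub>R L)) \<le> 1"
    and norm_M: "norm M \<le> 1" and P_idem: "P o\<^sub>L P = P"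
    and delta: "0 < \<delta>" "\<delta> < 1" and c_gt_1: "1 < c"
    and mixing: "\<forall>k. norm (opow k M - P) \<le> c * \<delta> ^ k"
    and t: "0 \<le> t" and n: "1 \<le> n" and t_le: "t \<le> real n * (step_limit c \<delta> / (norm L + 1))"
    and delta': "\<delta> < \<delta>'" "\<delta>' < 1"
  defines "cp \<equiv> norm (id_blinfun - P)"
    and "eb \<equiv> SUP s\<in>{0..t}. norm (op_exp (s *\<^sub>R (P o\<^sub>L L o\<^sub>L P)))"
  shows "norm (opow n (M o\<^sub>L op_exp ((t / real n) *\<^sub>R L)) - (op_exp (t *\<^sub>R (P o\<^sub>L L o\<^sub>L P)) o\<^sub>L P))
      \<le> t * cp * norm L / real n
        + (cp + (1 + eb) * (1 + cp ^ 2)) / 2 * (t ^ 2 * norm L ^ 2 / real n)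
        + 2 * c / (\<delta>' - \<delta>) * \<delta>' ^ n
        + 2 * \<delta>' / (1 - \<delta>') * (exp (6 * t * cp * c * norm L / (\<delta>' - \<delta>)) / real n)"
    (is "?lhs \<le> ?rhs")
proof -
  have lim: "(\<lambda>k. opow k M) \<longlonglongrightarrow> P"
    using mixing delta by (intro tendsto_opow_of_geometric_bound) auto
  have norm_P: "norm P \<le> 1"
    using lim norm_M by (rule norm_opow_limit_le_one)
  show ?thesis
  proof (cases "P = id_blinfun")
    case True
    then have "M = id_blinfun"
      using opow_limit_absorbs(1)[OF lim] by simp
    then have "?lhs = 0"
      using True n by (simp add: opow_op_exp)
    also have "0 \<le> ?rhs"
      using SUP_norm_op_exp_compression_bounds(2)[OF t norm_P, of L] t delta delta' c_gt_1
      by (intro add_nonneg_nonneg) (simp_all add: cp_def eb_def)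
    finally show ?thesis .
  next
    case False
    have "t / real n * norm L \<le> step_limit c \<delta> / (norm L + 1) * norm L"
      using t_le n by (intro mult_right_mono) (simp_all add: divide_le_eq mult.commute)
    also have "\<dots> \<le> step_limit c \<delta>"
      using step_limit_pos[of c \<delta>] c_gt_1 delta by (simp add: divide_le_eq add_nonneg_pos)
    finally have step: "t / real n * norm L \<le> step_limit c \<delta>" .
    show ?thesis
      unfolding cp_def eb_def
      using contractive norm_M P_idem opow_limit_absorbs[OF lim] norm_P False delta c_gt_1 mixing
        t n step delta'
      by (intro trotter_error_bound_proper_projection) auto
  qed
qed

theorem proposition3p4:
  fixes L M P :: "'a::banach \<Rightarrow>\<^sub>L 'a" and \<delta> c :: real
  assumes contractive_sg: "\<forall>t\<ge>0. norm (op_exp (t *\<^sub>R L)) \<le> 1"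
    and M_contr: "norm M \<le> 1"
    and P_proj: "P o\<^sub>L P = P"
    and delta: "0 < \<delta>" "\<delta> < 1"
    and c_gt: "c > 1"
    and conv: "\<forall>n::nat. norm (opow n M - P) \<le> c * \<delta> ^ n"
  shows "\<exists>\<epsilon>>0. \<forall>t::real. \<forall>n::nat. \<forall>\<delta>'::real.
           0 \<le> t \<longrightarrow> n \<ge> 1 \<longrightarrow> t \<le> real n * \<epsilon> \<longrightarrow> \<delta> < \<delta>' \<longrightarrow> \<delta>' < 1 \<longrightarrow>
           (let cp = norm (id_blinfun - P);
                nL = norm L;
                eb = (SUP s\<in>{0..t}. norm (op_exp (s *\<^sub>R (P o\<^sub>L L o\<^sub>L P))))
            in norm (opow n (M o\<^sub>L op_exp ((t / real n) *\<^sub>R L))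
                     - (op_exp (t *\<^sub>R (P o\<^sub>L L o\<^sub>L P)) o\<^sub>L P))
               \<le> t * cp * nL / real n
                 + (cp + (1 + eb) * (1 + cp ^ 2)) / 2 * (t ^ 2 * nL ^ 2 / real n)
                 + 2 * c / (\<delta>' - \<delta>) * \<delta>' ^ n
                 + 2 * \<delta>' / (1 - \<delta>') * (exp (6 * t * cp * c * nL / (\<delta>' - \<delta>)) / real n))"
proof -
  have "0 < step_limit c \<delta> / (norm L + 1)"
    using step_limit_pos[of c \<delta>] c_gt delta by (simp add: add_nonneg_pos)
  then show ?thesis
    unfolding Let_def using contractive_sg M_contr P_proj delta c_gt conv
    by (intro exI[of _ "step_limit c \<delta> / (norm L + 1)"] conjI allI impI trotter_error_bound) auto
qed

end
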